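(* Let $M$ be a finite-horizon MDP with exogenous/endogenous structure as in the context, and suppose $M$ is $\varepsilon_{air}$-AIR, the reward $r:\mathcal{S}\times\mathcal{A}\to[0,r_{max}]$ is known, and $\hat P^{\mathrm{end}}:\mathcal{S}\times\mathcal{A}\to\Delta(\mathcal{S}^{\mathrm{end}})$ satisfies $D_{TV}(P^{\mathrm{end}}(s,a,\cdot),\hat P^{\mathrm{end}}(s,a,\cdot))\le\varepsilon_p$ for all $(s,a)$. Let $\pi$ be a deterministic policy (fixed independently of the data), and let $\hat J(\pi,M)=\frac1N\sum_{i=1}^N\sum_{t=0}^{H-1}r(\tilde S_t^{(i)},\tilde A_t^{(i)})$ be the synthetic-rollout estimator defined in the context. Then for any $\zeta\in(0,1)$, with probability at least $1-\zeta$, $$\big|\hat J(\pi,M)-J(\pi,M)\big|\le v_{max}\left(H\varepsilon_{air}+H\varepsilon_p+\sqrt{\frac{\ln(2/\zeta)}{2N}}\right).$$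
   Context: MDP: $M=(\mathcal{S},\mathcal{A},P,r,H,\nu)$ with finite $\mathcal{S},\mathcal{A}$, reward in $[0,r_{max}]$, horizon $H$, initial distribution $\nu$; states are layered ($\mathcal{S}=\bigsqcup_{h=0}^{H-1}\mathcal{S}_h$, $\mathcal{S}_h$ the states reachable at step $h$), policies are stationary maps $\mathcal{S}\to\Delta(\mathcal{A})$. $\mathbb{P}^\pi_M$ is the trajectory law ($S_0\sim\nu$, $A_t\sim\pi(\cdot|S_t)$, $S_{t+1}\sim P(S_t,A_t,\cdot)$), $J(\pi,M)=\mathbb{E}^\pi_M[\sum_{h=0}^{H-1}r(S_h,A_h)]$, $v_{max}=Hr_{max}$. Exogenous structure: $\mathcal{S}=\mathcal{S}^{\mathrm{exo}}\times\mathcal{S}^{\mathrm{end}}$, $P(s,a,s')=P^{\mathrm{exo}}(s^{\mathrm{exo}},a,s'^{\mathrm{exo}})P^{\mathrm{end}}(s,a,s'^{\mathrm{end}})$. $M$ is $\varepsilon$-AIR if $D_{TV}(P^{\mathrm{exo}}(s^{\mathrm{exo}},a,\cdot),P^{\mathrm{exo}}(s^{\mathrm{exo}},a',\cdot))\le\varepsilon$ for all $s^{\mathrm{exo}},a,a'$; $D_{TV}(p,p')=\frac12\|p-p'\|_1$. Data: $N$ i.i.d. trajectories $(S_0^{(i)},A_0^{(i)},\dots,S_{H-1}^{(i)},A_{H-1}^{(i)})$ from $\mathbb{P}^{\pi_b}_M$ for some data collection policy $\pi_b$. Estimator: for each $i$, build a synthetic trajectory with $\tilde S_0^{(i)}=S_0^{(i)}$,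 $\tilde A_t^{(i)}\sim\pi(\tilde S_t^{(i)})$, $\tilde S_{t+1}^{(i),\mathrm{end}}\sim\hat P^{\mathrm{end}}(\tilde S_t^{(i)},\tilde A_t^{(i)},\cdot)$ and $\tilde S_{t+1}^{(i)}=(S_{t+1}^{(i),\mathrm{exo}},\tilde S_{t+1}^{(i),\mathrm{end}})$, where $S_{t+1}^{(i),\mathrm{exo}}$ is the exogenous component of the observed data state. *)

theory Defs
  imports "HOL-Probability.Probability"
begin

definition tv_dist :: "'b::finite pmf \<Rightarrow> 'b pmf \<Rightarrow> real" where
  "tv_dist p q = (1/2) * (\<Sum>x\<in>UNIV. \<bar>pmf p x - pmf q x\<bar>)"

definition trans :: "('x \<Rightarrow> 'a \<Rightarrow> 'x pmf) \<Rightarrow> ('x \<times> 'e \<Rightarrow> 'a \<Rightarrow> 'e pmf)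
    \<Rightarrow> 'x \<times> 'e \<Rightarrow> 'a \<Rightarrow> ('x \<times> 'e) pmf" where
  "trans Pexo Pend s a = pair_pmf (Pexo (fst s) a) (Pend s a)"

definition AIR :: "real \<Rightarrow> ('x \<Rightarrow> 'a \<Rightarrow> 'x::finite pmf) \<Rightarrow> bool" where
  "AIR eps Pexo \<longleftrightarrow> (\<forall>x a a'. tv_dist (Pexo x a) (Pexo x a') \<le> eps)"

definition layered :: "nat \<Rightarrow> 's pmf \<Rightarrow> ('s \<Rightarrow> 'a \<Rightarrow> 's pmf) \<Rightarrow> bool" where
  "layered H \<nu> P \<longleftrightarrow> (\<exists>layer :: 's \<Rightarrow> nat.
      (\<forall>s. pmf \<nu> s \<noteq> 0 \<longrightarrow> layer s = 0) \<and>
      (\<forall>s a s'. layer s + 1 < H \<longrightarrow> pmf (P s a) s' \<noteq> 0 \<longrightarrow> layer s' = layer s + 1))"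

text \<open>Law of the (state, action) sequence of n steps started in state s under a stationary
  stochastic policy pol. (The state after the last action is sampled but discarded.)\<close>
fun traj :: "('s \<Rightarrow> 'a \<Rightarrow> 's pmf) \<Rightarrow> ('s \<Rightarrow> 'a pmf) \<Rightarrow> nat \<Rightarrow> 's \<Rightarrow> ('s \<times> 'a) list pmf" where
  "traj P pol 0 s = return_pmf []"
| "traj P pol (Suc n) s =
     bind_pmf (pol s) (\<lambda>a. bind_pmf (P s a) (\<lambda>s'. bind_pmf (traj P pol n s')
       (\<lambda>rest. return_pmf ((s, a) # rest))))"

definition traj_law :: "'s pmf \<Rightarrow> ('s \<Rightarrow> 'a \<Rightarrow> 's pmf) \<Rightarrow> ('s \<Rightarrow> 'a pmf) \<Rightarrow> nat
    \<Rightarrow> ('s \<times> 'a) list pmf" where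
  "traj_law \<nu> P pol H = bind_pmf \<nu> (traj P pol H)"

definition ret :: "('s \<Rightarrow> 'a \<Rightarrow> real) \<Rightarrow> ('s \<times> 'a) list \<Rightarrow> real" where
  "ret r \<tau> = (\<Sum>(s, a) \<leftarrow> \<tau>. r s a)"

definition value_fn :: "'s pmf \<Rightarrow> ('s \<Rightarrow> 'a \<Rightarrow> 's pmf) \<Rightarrow> ('s \<Rightarrow> 'a \<Rightarrow> real) \<Rightarrow> nat
    \<Rightarrow> ('s \<Rightarrow> 'a) \<Rightarrow> real" where
  "value_fn \<nu> P r H \<pi> =
     measure_pmf.expectation (traj_law \<nu> P (\<lambda>s. return_pmf (\<pi> s)) H) (ret r)"

text \<open>Synthetic rollout from state s, given the observed future exogenous states xs:
  actions from pi, endogenous parts from Phat, exogenous parts copied from the data.\<close>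
fun synth :: "('x \<times> 'e \<Rightarrow> 'a) \<Rightarrow> ('x \<times> 'e \<Rightarrow> 'a \<Rightarrow> 'e pmf) \<Rightarrow> 'x \<times> 'e \<Rightarrow> 'x list
    \<Rightarrow> (('x \<times> 'e) \<times> 'a) list pmf" where
  "synth \<pi> Phat s [] = return_pmf [(s, \<pi> s)]"
| "synth \<pi> Phat s (x # xs) =
     bind_pmf (Phat s (\<pi> s)) (\<lambda>e. bind_pmf (synth \<pi> Phat (x, e) xs)
       (\<lambda>rest. return_pmf ((s, \<pi> s) # rest)))"

definition synth_traj :: "('x \<times> 'e \<Rightarrow> 'a) \<Rightarrow> ('x \<times> 'e \<Rightarrow> 'a \<Rightarrow> 'e pmf)
    \<Rightarrow> (('x \<times> 'e) \<times> 'a) list \<Rightarrow> (('x \<times> 'e) \<times> 'a) list pmf" where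
  "synth_traj \<pi> Phat \<tau> = (case \<tau> of [] \<Rightarrow> return_pmf []
      | (s, a) # rest \<Rightarrow> synth \<pi> Phat s (map (\<lambda>(s', a'). fst s') rest))"

fun iid :: "nat \<Rightarrow> 'b pmf \<Rightarrow> 'b list pmf" where
  "iid 0 p = return_pmf []"
| "iid (Suc n) p = bind_pmf p (\<lambda>x. bind_pmf (iid n p) (\<lambda>xs. return_pmf (x # xs)))"

definition data_and_synth :: "nat \<Rightarrow> ('x \<times> 'e) pmf \<Rightarrow> ('x \<Rightarrow> 'a \<Rightarrow> 'x pmf)
    \<Rightarrow> ('x \<times> 'e \<Rightarrow> 'a \<Rightarrow> 'e pmf) \<Rightarrow> ('x \<times> 'e \<Rightarrow> 'a pmf) \<Rightarrow> nat
    \<Rightarrow> ('x \<times> 'e \<Rightarrow> 'a) \<Rightarrow> ('x \<times> 'e \<Rightarrow> 'a \<Rightarrow> 'e pmf)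
    \<Rightarrow> ((('x \<times> 'e) \<times> 'a) list \<times> (('x \<times> 'e) \<times> 'a) list) list pmf" where
  "data_and_synth N \<nu> Pexo Pend \<pi>b H \<pi> Phat =
     iid N (bind_pmf (traj_law \<nu> (trans Pexo Pend) \<pi>b H)
              (\<lambda>\<tau>. bind_pmf (synth_traj \<pi> Phat \<tau>) (\<lambda>\<tau>'. return_pmf (\<tau>, \<tau>'))))"

definition J_hat :: "nat \<Rightarrow> (('x \<times> 'e) \<Rightarrow> 'a \<Rightarrow> real)
    \<Rightarrow> ((('x \<times> 'e) \<times> 'a) list \<times> (('x \<times> 'e) \<times> 'a) list) list \<Rightarrow> real" where
  "J_hat N r D = (1 / real N) * (\<Sum>i<N. ret r (snd (D ! i)))"

end

theory Submission
  imports Defs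
begin

text \<open>The N synthetic returns are i.i.d. with values in [0, H rmax], so by Hoeffding's inequality
  their average is within \<open>H rmax sqrt (ln (2/\<zeta>) / (2N))\<close> of their common mean with probability
  at least \<open>1 - \<zeta>\<close>. That mean is the value of a Markov reward process on pairs (data state,
  synthetic endogenous state), and a simulation argument compares it with \<open>J(\<pi>, M)\<close>: in each of
  the H steps, the exogenous transition taken under the behaviour action instead of \<open>\<pi>\<close> costs
  \<open>\<epsilon>_air\<close> in total variation (AIR), and \<open>Phat\<close> instead of \<open>Pend\<close> costs \<open>\<epsilon>_p\<close>, each weighted by
  the remaining value, which is at most \<open>H rmax\<close>.\<close>

\<comment> \<open>All distributions below have finite support, so integrability is never an issue.\<close>
declare integrable_measure_pmf_finite [simp]

lemma expectation_bind_pmf_finite: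
  fixes h :: "'b \<Rightarrow> 'c::{banach, second_countable_topology}"
  assumes "finite (set_pmf p)" "\<And>x. x \<in> set_pmf p \<Longrightarrow> finite (set_pmf (f x))"
  shows "measure_pmf.expectation (bind_pmf p f) h
       = measure_pmf.expectation p (\<lambda>x. measure_pmf.expectation (f x) h)"
  using assms
  by (simp add: pmf_expectation_bind[of "set_pmf p"] integral_measure_pmf[of "set_pmf p"])

lemma expectation_pair_pmf_finite:
  fixes f :: "'a \<times> 'b \<Rightarrow> 'c::{banach, second_countable_topology}"
  assumes "finite (set_pmf p)" "finite (set_pmf q)"
  shows "measure_pmf.expectation (pair_pmf p q) f
       = measure_pmf.expectation p (\<lambda>x. measure_pmf.expectation q (\<lambda>y. f (x, y)))"
  using assms by (simp add: pair_pmf_def expectation_bind_pmf_finite)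

lemma expectation_swap_finite:
  fixes f :: "'a \<Rightarrow> 'b \<Rightarrow> 'c::{banach, second_countable_topology}"
  assumes "finite (set_pmf p)" "finite (set_pmf q)"
  shows "measure_pmf.expectation p (\<lambda>x. measure_pmf.expectation q (f x))
       = measure_pmf.expectation q (\<lambda>y. measure_pmf.expectation p (\<lambda>x. f x y))"
proof -
  have "measure_pmf.expectation p (\<lambda>x. measure_pmf.expectation q (f x))
      = measure_pmf.expectation (pair_pmf p q) (\<lambda>(x, y). f x y)"
    using assms by (simp add: expectation_pair_pmf_finite)
  also have "\<dots> = measure_pmf.expectation (pair_pmf q p) (\<lambda>(y, x). f x y)"
    by (subst pair_commute_pmf) (simp add: case_prod_unfold)
  also have "\<dots> = measure_pmf.expectation q (\<lambda>y. measure_pmf.expectation p (\<lambda>x. f x y))"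
    using assms by (simp add: expectation_pair_pmf_finite)
  finally show ?thesis .
qed

lemma expectation_bounds:
  fixes f :: "'a \<Rightarrow> real"
  assumes "finite (set_pmf p)" "\<And>x. x \<in> set_pmf p \<Longrightarrow> 0 \<le> f x \<and> f x \<le> B"
  shows "0 \<le> measure_pmf.expectation p f \<and> measure_pmf.expectation p f \<le> B"
  using assms by (auto intro!: measure_pmf.integral_ge_const measure_pmf.integral_le_const AE_pmfI)

lemma abs_expectation_diff_le:
  fixes f :: "'a \<Rightarrow> real"
  assumes "finite (set_pmf p)" "\<And>x. x \<in> set_pmf p \<Longrightarrow> \<bar>f x - c\<bar> \<le> d"
  shows "\<bar>measure_pmf.expectation p f - c\<bar> \<le> d"
proof -
  have "measure_pmf.expectation p f - c = measure_pmf.expectation p (\<lambda>x. f x - c)"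
    using assms(1) by simp
  also have "\<bar>\<dots>\<bar> \<le> measure_pmf.expectation p (\<lambda>x. \<bar>f x - c\<bar>)"
    by (rule integral_abs_bound)
  also have "\<dots> \<le> d"
    using assms by (auto intro!: measure_pmf.integral_le_const AE_pmfI)
  finally show ?thesis .
qed

lemma tv_dist_nonneg: "0 \<le> tv_dist p q"
  unfolding tv_dist_def by (simp add: sum_nonneg)

lemma tv_dist_commute: "tv_dist p q = tv_dist q p"
  unfolding tv_dist_def by (simp add: abs_minus_commute)

lemma expectation_diff_le_tv_dist:
  fixes p q :: "'a::finite pmf"
  assumes "\<And>x. 0 \<le> f x \<and> f x \<le> B"
  shows "\<bar>measure_pmf.expectation p f - measure_pmf.expectation q f\<bar> \<le> B * tv_dist p q"
proof -
  have expectation_sum: "measure_pmf.expectation p g = (\<Sum>x\<in>UNIV. pmf p x * g x)"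
    for p :: "'a pmf" and g :: "'a \<Rightarrow> real"
    by (subst integral_measure_pmf_real[where A = UNIV]) (auto simp: mult.commute)
  have total_mass: "(\<Sum>x\<in>UNIV. pmf p x) = 1" for p :: "'a pmf"
    by (rule sum_pmf_eq_1) auto
  have "(\<Sum>x\<in>UNIV. (pmf p x - pmf q x) * (B / 2)) = 0"
    unfolding sum_distrib_right[symmetric] sum_subtractf total_mass by simp
  \<comment> \<open>Centring f at B/2 costs nothing, since p - q has total mass 0.\<close>
  then have "measure_pmf.expectation p f - measure_pmf.expectation q f
      = (\<Sum>x\<in>UNIV. (pmf p x - pmf q x) * (f x - B / 2))"
    by (simp add: expectation_sum right_diff_distrib left_diff_distrib sum_subtractf)
  also have "\<bar>\<dots>\<bar> \<le> (\<Sum>x\<in>UNIV. \<bar>pmf p x - pmf q x\<bar> * (B / 2))"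
  proof (rule order_trans[OF sum_abs sum_mono])
    fix x
    have "\<bar>f x - B / 2\<bar> \<le> B / 2" using assms[of x] by (auto simp: abs_if)
    then show "\<bar>(pmf p x - pmf q x) * (f x - B / 2)\<bar> \<le> \<bar>pmf p x - pmf q x\<bar> * (B / 2)"
      unfolding abs_mult by (rule mult_left_mono) simp_all
  qed
  also have "\<dots> = B * tv_dist p q"
    unfolding tv_dist_def sum_distrib_right[symmetric] by simp
  finally show ?thesis .
qed

lemma expectation_pair_pmf_diff_le_tv_dist:
  fixes p1 p2 :: "'a::finite pmf" and q1 q2 :: "'b::finite pmf"
  assumes "\<And>z. 0 \<le> g z \<and> g z \<le> B"
  shows "\<bar>measure_pmf.expectation (pair_pmf p1 q1) g - measure_pmf.expectation (pair_pmf p2 q2) g\<bar>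
       \<le> B * (tv_dist p1 p2 + tv_dist q1 q2)"
proof -
  let ?G = "\<lambda>q x. measure_pmf.expectation q (\<lambda>y. g (x, y))"
  have "\<bar>?G q1 x - ?G q2 x\<bar> \<le> B * tv_dist q1 q2" for x
    by (rule expectation_diff_le_tv_dist) (rule assms)
  then have "\<bar>measure_pmf.expectation p1 (\<lambda>x. ?G q1 x - ?G q2 x) - 0\<bar> \<le> B * tv_dist q1 q2"
    by (intro abs_expectation_diff_le) auto
  then have "\<bar>measure_pmf.expectation p1 (?G q1) - measure_pmf.expectation p1 (?G q2)\<bar>
      \<le> B * tv_dist q1 q2"
    by simp
  moreover have "\<bar>measure_pmf.expectation p1 (?G q2) - measure_pmf.expectation p2 (?G q2)\<bar>
      \<le> B * tv_dist p1 p2"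
    by (rule expectation_diff_le_tv_dist) (auto intro!: expectation_bounds assms)
  ultimately show ?thesis
    by (simp add: expectation_pair_pmf_finite distrib_left)
qed

lemma ret_Nil [simp]: "ret r [] = 0"
  by (simp add: ret_def)

lemma ret_Cons [simp]: "ret r ((s, a) # \<tau>) = r s a + ret r \<tau>"
  by (simp add: ret_def)

lemma ret_bounds:
  assumes "\<And>s a. 0 \<le> r s a \<and> r s a \<le> rmax"
  shows "0 \<le> ret r \<tau> \<and> ret r \<tau> \<le> real (length \<tau>) * rmax"
proof (induction \<tau>)
  case Nil
  then show ?case by simp
next
  case (Cons x \<tau>)
  then show ?case
    using assms[of "fst x" "snd x"] by (cases x) (auto simp: algebra_simps)
qed

lemma length_traj: "\<tau> \<in> set_pmf (traj P pol n s) \<Longrightarrow> length \<tau> = n"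
  by (induction n arbitrary: s \<tau>) auto

lemma finite_set_pmf_traj [simp]:
  fixes P :: "'s::finite \<Rightarrow> 'a::finite \<Rightarrow> 's pmf"
  shows "finite (set_pmf (traj P pol n s))"
  by (rule finite_subset[OF _ finite_lists_length_eq[of UNIV n]]) (auto dest: length_traj)

lemma length_synth: "\<tau> \<in> set_pmf (synth \<pi> Phat s xs) \<Longrightarrow> length \<tau> = Suc (length xs)"
  by (induction xs arbitrary: s \<tau>) auto

lemma finite_set_pmf_synth [simp]:
  fixes Phat :: "'x::finite \<times> 'e::finite \<Rightarrow> 'a::finite \<Rightarrow> 'e pmf"
  shows "finite (set_pmf (synth \<pi> Phat s xs))"
  by (rule finite_subset[OF _ finite_lists_length_eq[of UNIV "Suc (length xs)"]])
     (auto dest: length_synth)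

lemma length_synth_traj: "\<tau>' \<in> set_pmf (synth_traj \<pi> Phat \<tau>) \<Longrightarrow> length \<tau>' = length \<tau>"
  by (auto simp: synth_traj_def split: list.splits dest: length_synth)

lemma finite_set_pmf_synth_traj [simp]:
  fixes Phat :: "'x::finite \<times> 'e::finite \<Rightarrow> 'a::finite \<Rightarrow> 'e pmf"
  shows "finite (set_pmf (synth_traj \<pi> Phat \<tau>))"
  by (simp add: synth_traj_def split: list.split)

fun mrp_value :: "('z \<Rightarrow> 'z pmf) \<Rightarrow> ('z \<Rightarrow> real) \<Rightarrow> nat \<Rightarrow> 'z \<Rightarrow> real" where
  "mrp_value K R 0 z = 0"
| "mrp_value K R (Suc n) z = R z + measure_pmf.expectation (K z) (mrp_value K R n)"

lemma mrp_value_bounds: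
  fixes K :: "'z::finite \<Rightarrow> 'z pmf"
  assumes "\<And>z. 0 \<le> R z \<and> R z \<le> rmax"
  shows "0 \<le> mrp_value K R n z \<and> mrp_value K R n z \<le> real n * rmax"
proof (induction n arbitrary: z)
  case 0
  then show ?case by simp
next
  case (Suc n)
  have "0 \<le> measure_pmf.expectation (K z) (mrp_value K R n)
      \<and> measure_pmf.expectation (K z) (mrp_value K R n) \<le> real n * rmax"
    using Suc.IH by (intro expectation_bounds) auto
  then show ?case
    using assms[of z] by (simp add: algebra_simps)
qed

lemma mrp_value_simulation:
  fixes K1 :: "'z::finite \<Rightarrow> 'z pmf" and K2 :: "'s::finite \<Rightarrow> 's pmf" and f :: "'z \<Rightarrow> 's"
  assumes reward: "\<And>z. R1 z = R2 (f z)" "\<And>s. 0 \<le> R2 s \<and> R2 s \<le> rmax"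
    and step: "\<And>z g B. (\<And>s. 0 \<le> g s \<and> g s \<le> B) \<Longrightarrow>
      \<bar>measure_pmf.expectation (K1 z) (\<lambda>z'. g (f z')) - measure_pmf.expectation (K2 (f z)) g\<bar>
        \<le> B * \<delta>"
    and "0 \<le> \<delta>"
  shows "\<bar>mrp_value K1 R1 n z - mrp_value K2 R2 n (f z)\<bar> \<le> real n * real n * rmax * \<delta>"
proof (induction n arbitrary: z)
  case 0
  then show ?case by simp
next
  case (Suc n)
  let ?V1 = "mrp_value K1 R1 n" and ?V2 = "mrp_value K2 R2 n"
  have "mrp_value K1 R1 (Suc n) z - mrp_value K2 R2 (Suc n) (f z)
      = measure_pmf.expectation (K1 z) (\<lambda>z'. ?V1 z' - ?V2 (f z'))
        + (measure_pmf.expectation (K1 z) (\<lambda>z'. ?V2 (f z'))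
           - measure_pmf.expectation (K2 (f z)) ?V2)"
    using reward(1) by simp
  moreover have "\<bar>measure_pmf.expectation (K1 z) (\<lambda>z'. ?V1 z' - ?V2 (f z')) - 0\<bar>
      \<le> real n * real n * rmax * \<delta>"
    using Suc.IH by (intro abs_expectation_diff_le) auto
  moreover have "\<bar>measure_pmf.expectation (K1 z) (\<lambda>z'. ?V2 (f z'))
      - measure_pmf.expectation (K2 (f z)) ?V2\<bar> \<le> real n * rmax * \<delta>"
    by (intro step mrp_value_bounds reward(2))
  moreover have "real n * real n * rmax * \<delta> + real n * rmax * \<delta>
      \<le> real (Suc n) * real (Suc n) * rmax * \<delta>"
  proof -
    have "0 \<le> rmax * \<delta>"
      using reward(2)[of "f z"] \<open>0 \<le> \<delta>\<close> by simp
    then have "(real n * real n + real n) * (rmax * \<delta>)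
        \<le> (real (Suc n) * real (Suc n)) * (rmax * \<delta>)"
      by (intro mult_right_mono) (simp_all add: algebra_simps)
    then show ?thesis
      by (simp add: algebra_simps)
  qed
  ultimately show ?case
    by linarith
qed

lemma expectation_ret_traj:
  fixes P :: "'s::finite \<Rightarrow> 'a::finite \<Rightarrow> 's pmf"
  shows "measure_pmf.expectation (traj P (\<lambda>s. return_pmf (\<pi> s)) n s) (ret r)
       = mrp_value (\<lambda>s. P s (\<pi> s)) (\<lambda>s. r s (\<pi> s)) n s"
proof (induction n arbitrary: s)
  case 0
  then show ?case by simp
next
  case (Suc n)
  then show ?case
    by (simp add: bind_return_pmf expectation_bind_pmf_finite)
qed

text \<open>\<open>synth_traj\<close> with the initial endogenous state generalised to e, as the induction
  over the data trajectory requires.\<close>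
definition synth_along :: "('x \<times> 'e \<Rightarrow> 'a) \<Rightarrow> ('x \<times> 'e \<Rightarrow> 'a \<Rightarrow> 'e pmf) \<Rightarrow> 'e
    \<Rightarrow> (('x \<times> 'e) \<times> 'a) list \<Rightarrow> (('x \<times> 'e) \<times> 'a) list pmf" where
  "synth_along \<pi> Phat e \<tau> = (case \<tau> of [] \<Rightarrow> return_pmf []
      | (s, a) # rest \<Rightarrow> synth \<pi> Phat (fst s, e) (map (\<lambda>(s', a'). fst s') rest))"

lemma synth_traj_eq_synth_along:
  "\<tau> \<in> set_pmf (traj P pol n s) \<Longrightarrow> synth_traj \<pi> Phat \<tau> = synth_along \<pi> Phat (snd s) \<tau>"
  by (cases n) (auto simp: synth_traj_def synth_along_def)

lemma expectation_ret_synth_along_Cons: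
  fixes Phat :: "'x::finite \<times> 'e::finite \<Rightarrow> 'a::finite \<Rightarrow> 'e pmf"
  shows "measure_pmf.expectation (synth_along \<pi> Phat e ((s, a) # \<tau>)) (ret r)
       = r (fst s, e) (\<pi> (fst s, e)) + measure_pmf.expectation (Phat (fst s, e) (\<pi> (fst s, e)))
           (\<lambda>e'. measure_pmf.expectation (synth_along \<pi> Phat e' \<tau>) (ret r))"
  by (cases \<tau>) (auto simp: synth_along_def expectation_bind_pmf_finite)

definition synth_state :: "('x \<times> 'e) \<times> 'e \<Rightarrow> 'x \<times> 'e" where
  "synth_state z = (fst (fst z), snd z)"

definition synth_reward :: "('x \<times> 'e \<Rightarrow> 'a \<Rightarrow> real) \<Rightarrow> ('x \<times> 'e \<Rightarrow> 'a)
    \<Rightarrow> ('x \<times> 'e) \<times> 'e \<Rightarrow> real" where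
  "synth_reward r \<pi> z = r (synth_state z) (\<pi> (synth_state z))"

text \<open>A data state s paired with a synthetic endogenous state e is a Markov chain: the data
  moves under \<open>\<pi>b\<close> and P, while e moves under \<open>\<pi>\<close> and \<open>Phat\<close> from the synthetic state
  \<open>(fst s, e)\<close>, whose exogenous part is copied from the data.\<close>
definition synth_kernel :: "('x \<times> 'e \<Rightarrow> 'a \<Rightarrow> ('x \<times> 'e) pmf) \<Rightarrow> ('x \<times> 'e \<Rightarrow> 'a pmf)
    \<Rightarrow> ('x \<times> 'e \<Rightarrow> 'a) \<Rightarrow> ('x \<times> 'e \<Rightarrow> 'a \<Rightarrow> 'e pmf)
    \<Rightarrow> ('x \<times> 'e) \<times> 'e \<Rightarrow> (('x \<times> 'e) \<times> 'e) pmf" where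
  "synth_kernel P \<pi>b \<pi> Phat z = bind_pmf (\<pi>b (fst z))
     (\<lambda>a. pair_pmf (P (fst z) a) (Phat (synth_state z) (\<pi> (synth_state z))))"

lemma expectation_ret_synth_along_traj:
  fixes P :: "'x::finite \<times> 'e::finite \<Rightarrow> 'a::finite \<Rightarrow> ('x \<times> 'e) pmf"
  shows "measure_pmf.expectation (traj P \<pi>b n s)
           (\<lambda>\<tau>. measure_pmf.expectation (synth_along \<pi> Phat e \<tau>) (ret r))
       = mrp_value (synth_kernel P \<pi>b \<pi> Phat) (synth_reward r \<pi>) n (s, e)"
proof (induction n arbitrary: s e)
  case 0
  then show ?case by (simp add: synth_along_def)
next
  case (Suc n)
  let ?F = "\<lambda>e \<tau>. measure_pmf.expectation (synth_along \<pi> Phat e \<tau>) (ret r)"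
  let ?W = "mrp_value (synth_kernel P \<pi>b \<pi> Phat) (synth_reward r \<pi>) n"
  let ?st = "(fst s, e)"
  let ?Q = "Phat ?st (\<pi> ?st)"
  have "measure_pmf.expectation (traj P \<pi>b n s') (\<lambda>\<tau>. ?F e ((s, a) # \<tau>))
      = r ?st (\<pi> ?st) + measure_pmf.expectation ?Q (\<lambda>e'. ?W (s', e'))" for a s'
    by (simp add: expectation_ret_synth_along_Cons expectation_swap_finite[of "traj P \<pi>b n s'"]
        Suc.IH)
  then have "measure_pmf.expectation (traj P \<pi>b (Suc n) s) (?F e)
      = measure_pmf.expectation (\<pi>b s) (\<lambda>a. measure_pmf.expectation (P s a)
          (\<lambda>s'. r ?st (\<pi> ?st) + measure_pmf.expectation ?Q (\<lambda>e'. ?W (s', e'))))"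
    by (simp add: expectation_bind_pmf_finite)
  also have "\<dots> = mrp_value (synth_kernel P \<pi>b \<pi> Phat) (synth_reward r \<pi>) (Suc n) (s, e)"
    by (simp add: synth_kernel_def synth_reward_def synth_state_def expectation_bind_pmf_finite
        expectation_pair_pmf_finite)
  finally show ?case .
qed

lemma synth_kernel_step:
  fixes Pexo :: "'x::finite \<Rightarrow> 'a::finite \<Rightarrow> 'x pmf" and Pend Phat :: "'x \<times> 'e::finite \<Rightarrow> 'a \<Rightarrow> 'e pmf"
  assumes air: "AIR eps_air Pexo"
    and model: "\<And>s a. tv_dist (Pend s a) (Phat s a) \<le> eps_p"
    and g: "\<And>s. 0 \<le> g s \<and> g s \<le> B"
  shows "\<bar>measure_pmf.expectation (synth_kernel (trans Pexo Pend) \<pi>b \<pi> Phat z)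
           (\<lambda>z'. g (synth_state z'))
        - measure_pmf.expectation (trans Pexo Pend (synth_state z) (\<pi> (synth_state z))) g\<bar>
       \<le> B * (eps_air + eps_p)"
proof -
  let ?st = "synth_state z"
  let ?x = "fst (fst z)"
  let ?Q = "Phat ?st (\<pi> ?st)"
  have marginal: "measure_pmf.expectation (pair_pmf (trans Pexo Pend (fst z) a) ?Q)
        (\<lambda>z'. g (synth_state z'))
      = measure_pmf.expectation (pair_pmf (Pexo ?x a) ?Q) g" for a
    by (simp add: trans_def synth_state_def expectation_pair_pmf_finite)
  have per_action: "\<bar>measure_pmf.expectation (pair_pmf (Pexo ?x a) ?Q) g
        - measure_pmf.expectation (pair_pmf (Pexo ?x (\<pi> ?st)) (Pend ?st (\<pi> ?st))) g\<bar>
      \<le> B * (eps_air + eps_p)" for a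
  proof -
    have "0 \<le> B" using g order_trans by blast
    have "tv_dist (Pexo ?x a) (Pexo ?x (\<pi> ?st)) + tv_dist ?Q (Pend ?st (\<pi> ?st)) \<le> eps_air + eps_p"
      using air model[of ?st "\<pi> ?st"] by (intro add_mono) (auto simp: AIR_def tv_dist_commute)
    then have "B * (tv_dist (Pexo ?x a) (Pexo ?x (\<pi> ?st)) + tv_dist ?Q (Pend ?st (\<pi> ?st)))
        \<le> B * (eps_air + eps_p)"
      using \<open>0 \<le> B\<close> by (rule mult_left_mono)
    with expectation_pair_pmf_diff_le_tv_dist[OF g] show ?thesis
      by (rule order_trans)
  qed
  have "\<bar>measure_pmf.expectation (\<pi>b (fst z))
        (\<lambda>a. measure_pmf.expectation (pair_pmf (Pexo ?x a) ?Q) g)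
      - measure_pmf.expectation (pair_pmf (Pexo ?x (\<pi> ?st)) (Pend ?st (\<pi> ?st))) g\<bar>
      \<le> B * (eps_air + eps_p)"
    by (rule abs_expectation_diff_le) (simp_all only: per_action finite)
  then show ?thesis
    by (simp add: synth_kernel_def expectation_bind_pmf_finite marginal)
       (simp add: trans_def synth_state_def)
qed

lemma value_fn_eq_mrp_value:
  fixes P :: "'s::finite \<Rightarrow> 'a::finite \<Rightarrow> 's pmf"
  shows "value_fn \<nu> P r H \<pi>
       = measure_pmf.expectation \<nu> (mrp_value (\<lambda>s. P s (\<pi> s)) (\<lambda>s. r s (\<pi> s)) H)"
  by (simp add: value_fn_def traj_law_def expectation_bind_pmf_finite expectation_ret_traj)

lemma expectation_synthetic_return:
  fixes P :: "'x::finite \<times> 'e::finite \<Rightarrow> 'a::finite \<Rightarrow> ('x \<times> 'e) pmf"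
  shows "measure_pmf.expectation (bind_pmf (traj_law \<nu> P \<pi>b H)
           (\<lambda>\<tau>. bind_pmf (synth_traj \<pi> Phat \<tau>) (\<lambda>\<tau>'. return_pmf (\<tau>, \<tau>')))) (\<lambda>D. ret r (snd D))
       = measure_pmf.expectation \<nu> (\<lambda>s.
           mrp_value (synth_kernel P \<pi>b \<pi> Phat) (synth_reward r \<pi>) H (s, snd s))"
proof -
  have "measure_pmf.expectation (traj P \<pi>b H s)
          (\<lambda>\<tau>. measure_pmf.expectation (synth_traj \<pi> Phat \<tau>) (ret r))
      = measure_pmf.expectation (traj P \<pi>b H s)
          (\<lambda>\<tau>. measure_pmf.expectation (synth_along \<pi> Phat (snd s) \<tau>) (ret r))" for s
    by (intro integral_cong_AE AE_pmfI) (simp_all add: synth_traj_eq_synth_along)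
  then show ?thesis
    by (simp add: traj_law_def bind_assoc_pmf expectation_bind_pmf_finite
        expectation_ret_synth_along_traj)
qed

lemma synthetic_return_bias:
  fixes Pexo :: "'x::finite \<Rightarrow> 'a::finite \<Rightarrow> 'x pmf" and Pend Phat :: "'x \<times> 'e::finite \<Rightarrow> 'a \<Rightarrow> 'e pmf"
  assumes reward: "\<And>s a. 0 \<le> r s a \<and> r s a \<le> rmax"
    and air: "AIR eps_air Pexo"
    and model: "\<And>s a. tv_dist (Pend s a) (Phat s a) \<le> eps_p"
  shows "\<bar>measure_pmf.expectation (bind_pmf (traj_law \<nu> (trans Pexo Pend) \<pi>b H)
             (\<lambda>\<tau>. bind_pmf (synth_traj \<pi> Phat \<tau>) (\<lambda>\<tau>'. return_pmf (\<tau>, \<tau>')))) (\<lambda>D. ret r (snd D))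
           - value_fn \<nu> (trans Pexo Pend) r H \<pi>\<bar>
       \<le> real H * real H * rmax * (eps_air + eps_p)"
proof -
  let ?P = "trans Pexo Pend"
  let ?W = "mrp_value (synth_kernel ?P \<pi>b \<pi> Phat) (synth_reward r \<pi>) H"
  let ?V = "mrp_value (\<lambda>s. ?P s (\<pi> s)) (\<lambda>s. r s (\<pi> s)) H"
  have error_nonneg: "0 \<le> eps_air + eps_p"
    using air model tv_dist_nonneg unfolding AIR_def by (meson add_nonneg_nonneg order_trans)
  have "\<bar>?W z - ?V (synth_state z)\<bar> \<le> real H * real H * rmax * (eps_air + eps_p)" for z
    by (rule mrp_value_simulation)
       (use reward synth_kernel_step[where Pend = Pend and Phat = Phat, OF air model] error_nonneg
         in \<open>simp_all add: synth_reward_def\<close>)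
  then have "\<bar>measure_pmf.expectation \<nu> (\<lambda>s. ?W (s, snd s) - ?V s) - 0\<bar>
      \<le> real H * real H * rmax * (eps_air + eps_p)"
    by (intro abs_expectation_diff_le) (auto simp: synth_state_def)
  then show ?thesis
    by (simp add: expectation_synthetic_return value_fn_eq_mrp_value)
qed

lemma iid_eq_map_Pi_pmf:
  "iid N p = map_pmf (\<lambda>f. map f [k..<k + N]) (Pi_pmf {k..<k + N} d (\<lambda>_. p))"
proof (induction N arbitrary: k)
  case 0
  then show ?case by simp
next
  case (Suc N)
  have interval: "{k..<k + Suc N} = insert k {Suc k..<Suc k + N}"
    by auto
  have cons: "map (f(k := y)) [k..<k + Suc N] = y # map f [Suc k..<Suc k + N]" for f y
    by (simp add: upt_conv_Cons)
  have "Pi_pmf (insert k {Suc k..<Suc k + N}) d (\<lambda>_. p)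
      = p \<bind> (\<lambda>y. Pi_pmf {Suc k..<Suc k + N} d (\<lambda>_. p) \<bind> (\<lambda>f. return_pmf (f(k := y))))"
    by (rule Pi_pmf_insert') auto
  then show ?case
    unfolding interval
    by (simp only: map_bind_pmf map_return_pmf cons iid.simps Suc.IH[of "Suc k"] bind_map_pmf)
qed

lemma hoeffding_Pi_pmf:
  fixes p :: "'b pmf" and g :: "'b \<Rightarrow> real"
  assumes g: "\<And>x. x \<in> set_pmf p \<Longrightarrow> 0 \<le> g x \<and> g x \<le> B"
    and "0 < B" "0 < N" "0 \<le> \<epsilon>"
  shows "measure_pmf.prob (Pi_pmf {..<N} d (\<lambda>_. p))
           {f. \<epsilon> \<le> \<bar>(\<Sum>i<N. g (f i)) - real N * measure_pmf.expectation p g\<bar>}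
       \<le> 2 * exp (-2 * \<epsilon>\<^sup>2 / (real N * B\<^sup>2))"
proof -
  define M where "M = Pi_pmf {..<N} d (\<lambda>_. p)"
  have component: "map_pmf (\<lambda>f. f i) M = p" if "i < N" for i
    using that by (simp add: M_def Pi_pmf_component)
  have support: "f i \<in> set_pmf p" if "f \<in> set_pmf M" "i < N" for f i
    using that by (auto simp: M_def set_Pi_pmf PiE_dflt_def)
  interpret Hoeffding_ineq "measure_pmf M" "{..<N}" "\<lambda>i f. g (f i)" "\<lambda>_. 0" "\<lambda>_. B"
    "\<Sum>i<N. measure_pmf.expectation M (\<lambda>f. g (f i))"
  proof unfold_locales
    show "prob_space.indep_vars (measure_pmf M) (\<lambda>_. borel) (\<lambda>i f. g (f i)) {..<N}"
      unfolding M_def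
      by (rule prob_space.indep_vars_compose2[OF measure_pmf.prob_space_axioms indep_vars_Pi_pmf])
         auto
  qed (use support g in \<open>auto intro!: AE_pmfI\<close>)
  have "measure_pmf.expectation M (\<lambda>f. g (f i)) = measure_pmf.expectation p g" if "i < N" for i
    using integral_map_pmf[of "\<lambda>f. f i" M g, symmetric] component[OF that] by simp
  then have "(\<Sum>i<N. measure_pmf.expectation M (\<lambda>f. g (f i))) = real N * measure_pmf.expectation p g"
    by simp
  then show ?thesis
    using Hoeffding_ineq_abs_ge[OF \<open>0 \<le> \<epsilon>\<close>] \<open>0 < B\<close> \<open>0 < N\<close> by (simp add: M_def)
qed

lemma hoeffding_Pi_pmf_mean:
  fixes p :: "'b pmf" and g :: "'b \<Rightarrow> real"
  assumes g: "\<And>x. x \<in> set_pmf p \<Longrightarrow> 0 \<le> g x \<and> g x \<le> B"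
    and N: "0 < N" and \<zeta>: "0 < \<zeta>" "\<zeta> < 1"
  shows "measure_pmf.prob (Pi_pmf {..<N} d (\<lambda>_. p))
           {f. B * sqrt (ln (2 / \<zeta>) / (2 * real N))
                 < \<bar>(1 / real N) * (\<Sum>i<N. g (f i)) - measure_pmf.expectation p g\<bar>}
       \<le> \<zeta>"
proof -
  define t where "t = sqrt (ln (2 / \<zeta>) / (2 * real N))"
  define \<mu> where "\<mu> = measure_pmf.expectation p g"
  define M where "M = Pi_pmf {..<N} d (\<lambda>_. p)"
  define dev where "dev f = \<bar>(1 / real N) * (\<Sum>i<N. g (f i)) - \<mu>\<bar>" for f
  have "measure_pmf.prob M {f. B * t < dev f} \<le> \<zeta>"
  proof (cases "B = 0")
    case True
    then have "g x = 0" if "x \<in> set_pmf p" for x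
      using g that by force
    then have "dev f = 0" if "f \<in> set_pmf M" for f
      using that
      by (simp add: dev_def \<mu>_def M_def set_Pi_pmf PiE_dflt_def integral_eq_zero_AE AE_pmfI)
    then have "measure_pmf.prob M {f. B * t < dev f} = 0"
      using True by (auto simp: measure_pmf_zero_iff)
    with \<zeta> show ?thesis by simp
  next
    case False
    obtain x where "x \<in> set_pmf p"
      using set_pmf_not_empty[of p] by blast
    with g False have "0 < B"
      by force
    have "0 < ln (2 / \<zeta>)"
      using \<zeta> by simp
    then have t2: "t\<^sup>2 = ln (2 / \<zeta>) / (2 * real N)" and "0 \<le> t"
      using N by (simp_all add: t_def)
    have "{f. B * t < dev f} \<subseteq> {f. real N * B * t \<le> \<bar>(\<Sum>i<N. g (f i)) - real N * \<mu>\<bar>}"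
      using N by (auto simp: dev_def field_simps)
    then have "measure_pmf.prob M {f. B * t < dev f}
        \<le> measure_pmf.prob M {f. real N * B * t \<le> \<bar>(\<Sum>i<N. g (f i)) - real N * \<mu>\<bar>}"
      by (rule measure_pmf.finite_measure_mono) simp
    also have "\<dots> \<le> 2 * exp (-2 * (real N * B * t)\<^sup>2 / (real N * B\<^sup>2))"
      unfolding M_def \<mu>_def using g \<open>0 < B\<close> N \<open>0 \<le> t\<close> by (intro hoeffding_Pi_pmf) auto
    also have "-2 * (real N * B * t)\<^sup>2 / (real N * B\<^sup>2) = - ln (2 / \<zeta>)"
      using \<open>0 < B\<close> N t2 by (simp add: power_mult_distrib power2_eq_square field_simps)
    also have "2 * exp (- ln (2 / \<zeta>)) = \<zeta>"
      using \<zeta> by (simp add: exp_minus)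
    finally show ?thesis .
  qed
  then show ?thesis
    by (simp add: M_def dev_def t_def \<mu>_def)
qed

lemma hoeffding_iid_mean:
  fixes p :: "'b pmf" and g :: "'b \<Rightarrow> real"
  assumes "\<And>x. x \<in> set_pmf p \<Longrightarrow> 0 \<le> g x \<and> g x \<le> B"
    and "0 < N" "0 < \<zeta>" "\<zeta> < 1"
  shows "1 - \<zeta> \<le> measure_pmf.prob (iid N p)
           {D. \<bar>(1 / real N) * (\<Sum>i<N. g (D ! i)) - measure_pmf.expectation p g\<bar>
                 \<le> B * sqrt (ln (2 / \<zeta>) / (2 * real N))}"
proof -
  define M where "M = Pi_pmf {..<N} undefined (\<lambda>_. p)"
  define close where "close = {f. \<bar>(1 / real N) * (\<Sum>i<N. g (f i)) - measure_pmf.expectation p g\<bar>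
    \<le> B * sqrt (ln (2 / \<zeta>) / (2 * real N))}"
  have "iid N p = map_pmf (\<lambda>f. map f [0..<N]) M"
    using iid_eq_map_Pi_pmf[of N p 0 undefined] by (simp add: M_def atLeast0LessThan)
  then have "measure_pmf.prob (iid N p)
      {D. \<bar>(1 / real N) * (\<Sum>i<N. g (D ! i)) - measure_pmf.expectation p g\<bar>
            \<le> B * sqrt (ln (2 / \<zeta>) / (2 * real N))}
    = measure_pmf.prob M close"
    by (simp add: close_def vimage_def)
  moreover have "measure_pmf.prob M close = 1 - measure_pmf.prob M (UNIV - close)"
    by (subst measure_pmf.prob_compl[symmetric]) (simp_all add: Diff_Diff_Int)
  moreover have "measure_pmf.prob M (UNIV - close) \<le> \<zeta>"
    using hoeffding_Pi_pmf_mean[OF assms] by (simp add: M_def close_def set_diff_eq not_le)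
  ultimately show ?thesis
    by linarith
qed

theorem theorem2:
  fixes \<nu> :: "('x::finite \<times> 'e::finite) pmf"
    and Pexo :: "'x \<Rightarrow> 'a::finite \<Rightarrow> 'x pmf"
    and Pend :: "'x \<times> 'e \<Rightarrow> 'a \<Rightarrow> 'e pmf"
    and Phat :: "'x \<times> 'e \<Rightarrow> 'a \<Rightarrow> 'e pmf"
    and r :: "'x \<times> 'e \<Rightarrow> 'a \<Rightarrow> real"
    and \<pi>b :: "'x \<times> 'e \<Rightarrow> 'a pmf"
    and \<pi> :: "'x \<times> 'e \<Rightarrow> 'a"
    and H N :: nat and rmax eps_air eps_p \<zeta> :: real
  assumes layers: "layered H \<nu> (trans Pexo Pend)"
    and reward: "\<And>s a. 0 \<le> r s a \<and> r s a \<le> rmax"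
    and air: "AIR eps_air Pexo"
    and model: "\<And>s a. tv_dist (Pend s a) (Phat s a) \<le> eps_p"
    and N_pos: "N > 0"
    and zeta: "0 < \<zeta>" "\<zeta> < 1"
  shows "measure_pmf.prob (data_and_synth N \<nu> Pexo Pend \<pi>b H \<pi> Phat)
           {D. \<bar>J_hat N r D - value_fn \<nu> (trans Pexo Pend) r H \<pi>\<bar>
                 \<le> (real H * rmax) * (real H * eps_air + real H * eps_p
                      + sqrt (ln (2 / \<zeta>) / (2 * real N)))}
         \<ge> 1 - \<zeta>"
proof -
  define sample where "sample = bind_pmf (traj_law \<nu> (trans Pexo Pend) \<pi>b H)
    (\<lambda>\<tau>. bind_pmf (synth_traj \<pi> Phat \<tau>) (\<lambda>\<tau>'. return_pmf (\<tau>, \<tau>')))"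
  define \<mu> where "\<mu> = measure_pmf.expectation sample (\<lambda>D. ret r (snd D))"
  define J where "J = value_fn \<nu> (trans Pexo Pend) r H \<pi>"
  define t where "t = sqrt (ln (2 / \<zeta>) / (2 * real N))"
  have "0 \<le> ret r (snd D) \<and> ret r (snd D) \<le> real H * rmax" if "D \<in> set_pmf sample" for D
    using that ret_bounds[where \<tau> = "snd D", OF reward]
    by (auto simp: sample_def traj_law_def dest!: length_synth_traj length_traj)
  then have concentration: "1 - \<zeta> \<le> measure_pmf.prob (iid N sample)
      {D. \<bar>(1 / real N) * (\<Sum>i<N. ret r (snd (D ! i))) - \<mu>\<bar> \<le> real H * rmax * t}"
    unfolding \<mu>_def t_def using N_pos zeta by (rule hoeffding_iid_mean)
  have bias: "\<bar>\<mu> - J\<bar> \<le> real H * real H * rmax * (eps_air + eps_p)"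
    unfolding \<mu>_def J_def sample_def using reward air model by (rule synthetic_return_bias)
  have "{D. \<bar>(1 / real N) * (\<Sum>i<N. ret r (snd (D ! i))) - \<mu>\<bar> \<le> real H * rmax * t}
      \<subseteq> {D. \<bar>J_hat N r D - J\<bar> \<le> (real H * rmax) * (real H * eps_air + real H * eps_p + t)}"
    using bias by (auto simp: J_hat_def algebra_simps)
  then have "measure_pmf.prob (iid N sample)
      {D. \<bar>(1 / real N) * (\<Sum>i<N. ret r (snd (D ! i))) - \<mu>\<bar> \<le> real H * rmax * t}
    \<le> measure_pmf.prob (iid N sample)
      {D. \<bar>J_hat N r D - J\<bar> \<le> (real H * rmax) * (real H * eps_air + real H * eps_p + t)}"
    by (rule measure_pmf.finite_measure_mono) simp
  with concentration show ?thesis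
    by (simp add: data_and_synth_def sample_def J_def t_def)
qed

end
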